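(* Let $q$ be a prime power. For each integer $k\ge 3$ there exists an $[n,k]_q$ MWS code with $n<q^{\frac{k^2+k-4}{2}}$.
   Context: An $[n,k]_q$ code is a $k$-dimensional subspace of $\mathbb{F}_q^n$, non-degenerate (no coordinate identically zero on the code). It is MWS if the set of its non-zero Hamming weights has cardinality $\frac{q^k-1}{q-1}$. *)

theory Defs
  imports Complex_Main "HOL-Library.Function_Algebras" "HOL-Library.Cardinality"
begin

text \<open>Vectors of F_q^n are modelled as functions nat => 'a vanishing outside {0..<n};
  the field F_q is a finite field type 'a with q = CARD('a).\<close>

definition scalev :: "'a::field \<Rightarrow> (nat \<Rightarrow> 'a) \<Rightarrow> (nat \<Rightarrow> 'a)" where
  "scalev c v = (\<lambda>i. c * v i)"

lemma vector_space_scalev: "vector_space (scalev :: 'a::field \<Rightarrow> _)"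
  unfolding vector_space_def scalev_def by (auto simp: fun_eq_iff algebra_simps)

definition ambient :: "nat \<Rightarrow> (nat \<Rightarrow> 'a::zero) set" where
  "ambient n = {v. \<forall>i. n \<le> i \<longrightarrow> v i = 0}"

definition hweight :: "nat \<Rightarrow> (nat \<Rightarrow> 'a::zero) \<Rightarrow> nat" where
  "hweight n v = card {i. i < n \<and> v i \<noteq> 0}"

definition is_code :: "nat \<Rightarrow> nat \<Rightarrow> (nat \<Rightarrow> 'a::field) set \<Rightarrow> bool" where
  "is_code n k C \<longleftrightarrow> C \<subseteq> ambient n \<and> module.subspace scalev C
     \<and> vector_space.dim scalev C = k \<and> (\<forall>i<n. \<exists>c\<in>C. c i \<noteq> 0)"

definition weights :: "nat \<Rightarrow> (nat \<Rightarrow> 'a::zero) set \<Rightarrow> nat set" where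
  "weights n C = {hweight n c | c. c \<in> C \<and> c \<noteq> 0}"

definition is_MWS :: "nat \<Rightarrow> nat \<Rightarrow> (nat \<Rightarrow> 'a::{finite,field}) set \<Rightarrow> bool" where
  "is_MWS n k C \<longleftrightarrow> card (weights n C) = (CARD('a) ^ k - 1) div (CARD('a) - 1)"

end

theory Submission
  imports Defs "HOL-Library.Multiset"
begin

text \<open>A code is given by the multiset of columns of a generator matrix; the weight of the codeword
  of a message \<open>u\<close> is the number of columns not orthogonal to \<open>u\<close>, and the code is MWS exactly when
  this weight is positive and determines \<open>u\<close> up to a scalar. In dimension 3 an explicit multiset of
  fewer than \<open>q\<^sup>4\<close> columns works. From dimension \<open>k\<close> to \<open>k + 1\<close> one takes \<open>m\<close> copies of the old
  columns together with a multiset \<open>R\<close> of columns with last coordinate 1 whose weights stay below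
  \<open>m\<close>: the new weight is \<open>m\<close> times the old weight of the truncated message plus its \<open>R\<close>-weight, and
  the \<open>R\<close>-weight records the ratios \<open>- u\<^sub>k / u\<^sub>j\<close> as base-\<open>q\<close> digits, which recovers the last
  coordinate. Since \<open>m \<le> q\<^bsup>k+1\<^esup>\<close>, each step multiplies the length by at most \<open>q\<^bsup>k+1\<^esup>\<close>, and
  \<open>4 + 4 + 5 + \<dots> + k = (k\<^sup>2 + k - 4) / 2\<close>.\<close>

interpretation V: vector_space "scalev :: 'a::field \<Rightarrow> (nat \<Rightarrow> 'a) \<Rightarrow> _"
  by (rule vector_space_scalev)

lemma scalev_apply [simp]: "scalev c v i = c * v i"
  by (simp add: scalev_def)

lemma ambient_add: "u \<in> ambient k \<Longrightarrow> v \<in> ambient k \<Longrightarrow> u + v \<in> ambient k"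
  for u v :: "nat \<Rightarrow> 'a::monoid_add"
  unfolding ambient_def by auto

lemma ambient_scalev: "u \<in> ambient k \<Longrightarrow> scalev c u \<in> ambient k"
  unfolding ambient_def by auto

lemma zero_in_ambient [simp]: "0 \<in> ambient k"
  unfolding ambient_def by auto

lemma ambient_mono: "k \<le> m \<Longrightarrow> ambient k \<subseteq> ambient m"
  unfolding ambient_def by auto

lemma subspace_ambient: "V.subspace (ambient k)"
  by (rule V.subspaceI) (auto intro: ambient_add ambient_scalev)

lemma fun_upd_in_ambient_Suc:
  "u(k := 0) \<in> ambient k \<longleftrightarrow> u \<in> ambient (Suc k)"
  unfolding ambient_def by (auto simp: not_less_eq_eq le_Suc_eq)

lemma ambient_Suc: "ambient (Suc k) = (\<lambda>(u, a). u(k := a)) ` (ambient k \<times> UNIV)"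
proof (intro set_eqI iffI)
  fix x :: "nat \<Rightarrow> 'a" assume "x \<in> ambient (Suc k)"
  then have "(x(k := 0), x k) \<in> ambient k \<times> UNIV"
    using fun_upd_in_ambient_Suc by blast
  then show "x \<in> (\<lambda>(u, a). u(k := a)) ` (ambient k \<times> UNIV)"
    by (rule rev_image_eqI) simp
qed (auto simp: ambient_def)

lemma card_ambient: "card (ambient k :: (nat \<Rightarrow> 'a::{finite,zero}) set) = CARD('a) ^ k"
  and finite_ambient: "finite (ambient k :: (nat \<Rightarrow> 'a::{finite,zero}) set)"
proof (induction k)
  case 0
  have "ambient 0 = {0 :: nat \<Rightarrow> 'a}"
    unfolding ambient_def by auto
  then show "card (ambient 0 :: (nat \<Rightarrow> 'a) set) = CARD('a) ^ 0"
    and "finite (ambient 0 :: (nat \<Rightarrow> 'a) set)" by simp_all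
next
  case (Suc k)
  have "inj_on (\<lambda>(u, a). u(k := a)) (ambient k \<times> (UNIV :: 'a set))"
    unfolding inj_on_def ambient_def by (auto simp: fun_eq_iff)
  then show "card (ambient (Suc k) :: (nat \<Rightarrow> 'a) set) = CARD('a) ^ Suc k"
    and "finite (ambient (Suc k) :: (nat \<Rightarrow> 'a) set)"
    using Suc by (simp_all add: ambient_Suc card_image card_cartesian_product)
qed

lemma two_le_card_field: "2 \<le> CARD('a::{finite,field})"
  using card_mono[of UNIV "{0::'a, 1}"] by simp

definition unit_vec :: "nat \<Rightarrow> nat \<Rightarrow> 'a::{zero,one}" where
  "unit_vec l = (\<lambda>i. if i = l then 1 else 0)"

lemma unit_vec_in_ambient: "l < k \<Longrightarrow> unit_vec l \<in> ambient k"
  unfolding unit_vec_def ambient_def by auto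

lemma sum_fun_apply: "(\<Sum>x\<in>A. f x) i = (\<Sum>x\<in>A. f x i)"
  by (induction A rule: infinite_finite_induct) auto

lemma ambient_eq_sum_unit_vec:
  assumes "u \<in> ambient k"
  shows "u = (\<Sum>l<k. scalev (u l) (unit_vec l))"
proof
  fix i
  have "(\<Sum>l<k. scalev (u l) (unit_vec l)) i = (\<Sum>l<k. if l = i then u i else 0)"
    unfolding sum_fun_apply by (intro sum.cong) (auto simp: unit_vec_def)
  also have "\<dots> = u i"
    using assms unfolding ambient_def by (cases "i < k") auto
  finally show "u i = (\<Sum>l<k. scalev (u l) (unit_vec l)) i" by simp
qed

lemma span_unit_vec: "V.span (unit_vec ` {..<k}) = (ambient k :: (nat \<Rightarrow> 'a::field) set)"
proof (rule V.span_subspace)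
  show "unit_vec ` {..<k} \<subseteq> (ambient k :: (nat \<Rightarrow> 'a) set)"
    using unit_vec_in_ambient by blast
  show "ambient k \<subseteq> V.span (unit_vec ` {..<k} :: (nat \<Rightarrow> 'a) set)"
    using ambient_eq_sum_unit_vec
    by (metis (no_types, lifting) V.span_base V.span_scale V.span_sum imageI lessThan_iff subsetI)
qed (rule subspace_ambient)

lemma independent_unit_vec: "V.independent (unit_vec ` {..<k} :: (nat \<Rightarrow> 'a::field) set)"
proof
  assume "V.dependent (unit_vec ` {..<k} :: (nat \<Rightarrow> 'a) set)"
  then obtain c where c: "\<exists>v\<in>unit_vec ` {..<k}. c v \<noteq> 0"
    and sum0: "(\<Sum>v\<in>unit_vec ` {..<k}. scalev (c v) v) = (0 :: nat \<Rightarrow> 'a)"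
    by (auto simp: V.dependent_finite)
  have inj: "inj_on (unit_vec :: nat \<Rightarrow> nat \<Rightarrow> 'a) {..<k}"
    by (rule inj_onI) (metis unit_vec_def zero_neq_one)
  obtain l where l: "l < k" "c (unit_vec l) \<noteq> 0"
    using c by auto
  have "(\<Sum>v\<in>unit_vec ` {..<k}. scalev (c v) v) l = (\<Sum>m<k. c (unit_vec m) * unit_vec m l)"
    by (simp add: sum.reindex[OF inj] sum_fun_apply)
  also have "\<dots> = c (unit_vec l)"
    using l(1) by (simp add: unit_vec_def if_distrib cong: if_cong)
  finally show False using sum0 l(2) by simp
qed

section \<open>Codes given by multisets of columns\<close>

definition dotp :: "nat \<Rightarrow> (nat \<Rightarrow> 'a::comm_ring_1) \<Rightarrow> (nat \<Rightarrow> 'a) \<Rightarrow> 'a" where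
  "dotp k u v = (\<Sum>l<k. u l * v l)"

lemma dotp_add_left: "dotp k (u + w) v = dotp k u v + dotp k w v"
  unfolding dotp_def by (simp add: distrib_right sum.distrib)

lemma dotp_add_right: "dotp k u (v + w) = dotp k u v + dotp k u w"
  unfolding dotp_def by (simp add: distrib_left sum.distrib)

lemma dotp_scalev_left: "dotp k (scalev c u) v = c * dotp k u v"
  unfolding dotp_def by (simp add: sum_distrib_left mult.assoc)

lemma dotp_scalev_right: "dotp k u (scalev c v) = c * dotp k u v"
  unfolding dotp_def by (simp add: sum_distrib_left algebra_simps)

lemma dotp_unit_vec_left: "l < k \<Longrightarrow> dotp k (unit_vec l) v = v l"
  unfolding dotp_def unit_vec_def by (simp add: if_distrib if_distribR cong: if_cong)

lemma dotp_unit_vec_right: "l < k \<Longrightarrow> dotp k u (unit_vec l) = u l"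
  unfolding dotp_def unit_vec_def by (simp add: if_distrib if_distribR cong: if_cong)

lemma dotp_Suc_ambient: "v \<in> ambient k \<Longrightarrow> dotp (Suc k) u v = dotp k u v"
  unfolding dotp_def ambient_def by simp

lemma dotp_cong: "(\<And>i. i < k \<Longrightarrow> u i = u' i) \<Longrightarrow> dotp k u v = dotp k u' v"
  unfolding dotp_def by simp

text \<open>A multiset \<open>M\<close> of vectors of \<open>F\<^sub>q\<^sup>k\<close> stands for the columns of a generator matrix;
  \<open>codeword k M u\<close> is the codeword \<open>u G\<close>, and \<open>col_weight k M u\<close> its Hamming weight.\<close>

definition col_weight :: "nat \<Rightarrow> (nat \<Rightarrow> 'a::field) multiset \<Rightarrow> (nat \<Rightarrow> 'a) \<Rightarrow> nat" where
  "col_weight k M u = size (filter_mset (\<lambda>v. dotp k u v \<noteq> 0) M)"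

definition col_list :: "'b multiset \<Rightarrow> 'b list" where
  "col_list M = (SOME xs. mset xs = M)"

lemma mset_col_list [simp]: "mset (col_list M) = M"
  unfolding col_list_def by (metis (mono_tags) ex_mset someI_ex)

lemma length_col_list [simp]: "length (col_list M) = size M"
  by (metis mset_col_list size_mset)

definition codeword :: "nat \<Rightarrow> (nat \<Rightarrow> 'a::field) multiset \<Rightarrow> (nat \<Rightarrow> 'a) \<Rightarrow> nat \<Rightarrow> 'a" where
  "codeword k M u = (\<lambda>i. if i < size M then dotp k u (col_list M ! i) else 0)"

lemma col_weight_union: "col_weight k (A + B) u = col_weight k A u + col_weight k B u"
  unfolding col_weight_def by simp

lemma col_weight_repeat_mset: "col_weight k (repeat_mset n A) u = n * col_weight k A u"
  unfolding col_weight_def by (induction n) auto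

lemma col_weight_replicate_mset:
  "col_weight k (replicate_mset m v) u = (if dotp k u v \<noteq> 0 then m else 0)"
  unfolding col_weight_def by (induction m) auto

lemma col_weight_sum: "col_weight k (\<Sum>a\<in>S. f a) u = (\<Sum>a\<in>S. col_weight k (f a) u)"
  by (induction S rule: infinite_finite_induct) (auto simp: col_weight_union col_weight_def)

lemma col_weight_scalev: "c \<noteq> 0 \<Longrightarrow> col_weight k M (scalev c u) = col_weight k M u"
  unfolding col_weight_def by (simp add: dotp_scalev_left)

lemma col_weight_zero [simp]: "col_weight k M 0 = 0"
  unfolding col_weight_def dotp_def by simp

lemma hweight_codeword: "hweight (size M) (codeword k M u) = col_weight k M u"
proof -
  have "hweight (size M) (codeword k M u)
      = card {i. i < length (col_list M) \<and> dotp k u (col_list M ! i) \<noteq> 0}"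
    unfolding hweight_def codeword_def by (rule arg_cong[where f = card]) auto
  also have "\<dots> = length (filter (\<lambda>v. dotp k u v \<noteq> 0) (col_list M))"
    by (simp add: length_filter_conv_card)
  also have "\<dots> = col_weight k M u"
    unfolding col_weight_def by (metis mset_col_list mset_filter size_mset)
  finally show ?thesis .
qed

lemma linear_codeword: "Vector_Spaces.linear scalev scalev (codeword k M)"
  unfolding Vector_Spaces.linear_iff
  using dotp_scalev_left[of k]
  by (auto simp: vector_space_scalev codeword_def dotp_add_left scalev_def fun_eq_iff)

lemma codeword_in_ambient: "codeword k M u \<in> ambient (size M)"
  unfolding codeword_def ambient_def by auto

definition mws_columns :: "nat \<Rightarrow> (nat \<Rightarrow> 'a::field) multiset \<Rightarrow> bool" where
  "mws_columns k M \<longleftrightarrow> (\<forall>v\<in>#M. v \<in> ambient k \<and> v \<noteq> 0)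
     \<and> (\<forall>u\<in>ambient k - {0}. 0 < col_weight k M u)
     \<and> (\<forall>u\<in>ambient k - {0}. \<forall>v\<in>ambient k - {0}.
          col_weight k M u = col_weight k M v \<longrightarrow> (\<exists>c. v = scalev c u))"

lemma mws_columnsD:
  assumes "mws_columns k M"
  shows "v \<in># M \<Longrightarrow> v \<in> ambient k \<and> v \<noteq> 0"
    and "u \<in> ambient k \<Longrightarrow> u \<noteq> 0 \<Longrightarrow> 0 < col_weight k M u"
    and "u \<in> ambient k - {0} \<Longrightarrow> v \<in> ambient k - {0} \<Longrightarrow>
      col_weight k M u = col_weight k M v \<Longrightarrow> \<exists>c. v = scalev c u"
  using assms unfolding mws_columns_def by blast+

lemma card_image_eq_num_points:
  fixes f :: "(nat \<Rightarrow> 'a::{finite,field}) \<Rightarrow> 'b"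
  assumes invariant: "\<And>u c. u \<in> ambient k - {0} \<Longrightarrow> c \<noteq> 0 \<Longrightarrow> f (scalev c u) = f u"
    and separating: "\<And>u v. u \<in> ambient k - {0} \<Longrightarrow> v \<in> ambient k - {0} \<Longrightarrow> f u = f v \<Longrightarrow>
      \<exists>c. v = scalev c u"
  shows "card (f ` (ambient k - {0})) = (CARD('a) ^ k - 1) div (CARD('a) - 1)"
proof -
  let ?P = "ambient k - {0} :: (nat \<Rightarrow> 'a) set"
  have fibre: "{u \<in> ?P. f u = f u0} = (\<lambda>c. scalev c u0) ` (UNIV - {0})" if u0: "u0 \<in> ?P" for u0
  proof (intro set_eqI iffI)
    fix u assume u: "u \<in> {u \<in> ?P. f u = f u0}"
    then obtain c where "u = scalev c u0"
      using separating[of u0 u] u0 by auto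
    with u show "u \<in> (\<lambda>c. scalev c u0) ` (UNIV - {0})" by auto
  qed (use u0 invariant ambient_scalev in auto)
  have card_fibre: "card {u \<in> ?P. f u = y} = CARD('a) - 1" if y: "y \<in> f ` ?P" for y
  proof -
    obtain u0 where u0: "u0 \<in> ?P" "y = f u0"
      using y by blast
    have "inj_on (\<lambda>c. scalev c u0) (UNIV - {0})"
      using u0 by (auto simp: inj_on_def)
    then show ?thesis
      unfolding u0(2) fibre[OF u0(1)] by (simp add: card_image card_Diff_singleton)
  qed
  have "card ?P = card (\<Union>y\<in>f ` ?P. {u \<in> ?P. f u = y})"
    by (rule arg_cong[where f = card]) auto
  also have "\<dots> = (\<Sum>y\<in>f ` ?P. card {u \<in> ?P. f u = y})"
    using finite_ambient by (intro card_UN_disjoint) auto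
  also have "\<dots> = card (f ` ?P) * (CARD('a) - 1)"
    using card_fibre by simp
  finally have "CARD('a) ^ k - 1 = card (f ` ?P) * (CARD('a) - 1)"
    by (simp add: card_ambient finite_ambient)
  moreover have "0 < CARD('a) - 1"
    using two_le_card_field[where 'a = 'a] by linarith
  ultimately show ?thesis by simp
qed

lemma inj_on_codeword:
  assumes "mws_columns k M"
  shows "inj_on (codeword k M) (ambient k)"
proof -
  interpret L: Vector_Spaces.linear scalev scalev "codeword k M"
    by (rule linear_codeword)
  have "u = 0" if "u \<in> ambient k" "codeword k M u = 0" for u
  proof (rule ccontr)
    assume "u \<noteq> 0"
    then have "0 < col_weight k M u"
      using mws_columnsD(2)[OF assms that(1)] by blast
    with that(2) show False
      using hweight_codeword[of M k u] by (simp add: hweight_def)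
  qed
  then show ?thesis
    using L.inj_on_iff_eq_0[OF subspace_ambient] by blast
qed

lemma dim_codeword_image:
  assumes "mws_columns k M"
  shows "V.dim (codeword k M ` ambient k) = k"
proof -
  interpret L: Vector_Spaces.linear scalev scalev "codeword k M"
    by (rule linear_codeword)
  let ?U = "unit_vec ` {..<k} :: (nat \<Rightarrow> 'a) set"
  have inj: "inj_on (codeword k M) (V.span ?U)"
    using inj_on_codeword[OF assms] by (simp add: span_unit_vec)
  have "V.independent (codeword k M ` ?U)"
    using L.dependent_inj_imageD[OF _ inj] independent_unit_vec by blast
  then have "V.dim (V.span (codeword k M ` ?U)) = card (codeword k M ` ?U)"
    by (rule V.dim_span_eq_card_independent)
  also have "\<dots> = card ?U"
    using inj V.span_superset by (intro card_image) (rule inj_on_subset)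
  also have "\<dots> = k"
    by (subst card_image) (auto simp: inj_on_def unit_vec_def fun_eq_iff)
  finally show ?thesis
    by (simp add: L.span_image span_unit_vec)
qed

lemma nondegenerate_codeword_image:
  assumes "mws_columns k M" "i < size M"
  shows "\<exists>c\<in>codeword k M ` ambient k. c i \<noteq> 0"
proof -
  let ?v = "col_list M ! i"
  have "?v \<in># M"
    using assms(2) by (metis length_col_list mset_col_list nth_mem set_mset_mset)
  then have v: "?v \<in> ambient k" "?v \<noteq> 0"
    using mws_columnsD(1)[OF assms(1)] by auto
  then obtain l where l: "?v l \<noteq> 0"
    by (auto simp: fun_eq_iff)
  then have "l < k"
    using v(1) unfolding ambient_def by (metis (mono_tags, lifting) mem_Collect_eq not_less)
  then have "codeword k M (unit_vec l) i \<noteq> 0"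
    using assms(2) l by (simp add: codeword_def dotp_unit_vec_left)
  then show ?thesis
    using unit_vec_in_ambient[OF \<open>l < k\<close>] by blast
qed

lemma weights_codeword_image:
  assumes "mws_columns k M"
  shows "weights (size M) (codeword k M ` ambient k) = col_weight k M ` (ambient k - {0})"
proof -
  interpret L: Vector_Spaces.linear scalev scalev "codeword k M"
    by (rule linear_codeword)
  have "codeword k M u \<noteq> 0 \<longleftrightarrow> u \<noteq> 0" if "u \<in> ambient k" for u
    using inj_on_codeword[OF assms] that L.zero by (metis inj_on_def zero_in_ambient)
  then show ?thesis
    unfolding weights_def by (force simp: hweight_codeword)
qed

theorem mws_columns_code:
  fixes M :: "(nat \<Rightarrow> 'a::{finite,field}) multiset"
  assumes "mws_columns k M"
  shows "is_code (size M) k (codeword k M ` ambient k)"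
    and "is_MWS (size M) k (codeword k M ` ambient k)"
proof -
  interpret L: Vector_Spaces.linear scalev scalev "codeword k M"
    by (rule linear_codeword)
  show "is_code (size M) k (codeword k M ` ambient k)"
    unfolding is_code_def
    using codeword_in_ambient L.subspace_image[OF subspace_ambient] dim_codeword_image[OF assms]
      nondegenerate_codeword_image[OF assms] by blast
  show "is_MWS (size M) k (codeword k M ` ambient k)"
    unfolding is_MWS_def weights_codeword_image[OF assms]
  proof (rule card_image_eq_num_points)
    show "col_weight k M (scalev c u) = col_weight k M u" if "c \<noteq> 0" for u c
      using col_weight_scalev[OF that] .
    show "\<exists>c. v = scalev c u"
      if "u \<in> ambient k - {0}" "v \<in> ambient k - {0}" "col_weight k M u = col_weight k M v" for u v
      using mws_columnsD(3)[OF assms that] .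
  qed
qed

section \<open>Base-\<open>q\<close> digits\<close>

lemma mult_add_eq_mult_add_lessD:
  fixes m a b r s :: nat
  assumes "m * a + r = m * b + s" "r < m" "s < m"
  shows "a = b" and "r = s"
proof -
  have "a = (m * a + r) div m" "b = (m * b + s) div m"
    using assms(2,3) by simp_all
  then show "a = b"
    using assms(1) by simp
  then show "r = s"
    using assms(1) by simp
qed

lemma ex_bij_fixing_zero: "\<exists>f :: 'a::{finite,zero} \<Rightarrow> nat. bij_betw f UNIV {..<CARD('a)} \<and> f 0 = 0"
proof -
  obtain n where n: "CARD('a) = Suc n"
    using gr0_implies_Suc[of "CARD('a)"] by auto
  have "card (UNIV - {0::'a}) = n"
    by (simp add: card_Diff_singleton n)
  then obtain h :: "'a \<Rightarrow> nat" where h: "bij_betw h (UNIV - {0}) {..<n}"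
    using ex_bij_betw_finite_nat[of "UNIV - {0::'a}"] by (auto simp: atLeast0LessThan)
  define f where "f x = (if x = 0 then 0 else Suc (h x))" for x
  have "bij_betw (Suc \<circ> h) (UNIV - {0}) (Suc ` {..<n})"
    using h by (rule bij_betw_trans) (simp add: bij_betw_imageI)
  then have "bij_betw f (UNIV - {0}) (Suc ` {..<n})"
    by (subst bij_betw_cong[where g = "Suc \<circ> h"]) (simp_all add: f_def)
  then have "bij_betw f ({0} \<union> (UNIV - {0})) ({0} \<union> Suc ` {..<n})"
    by (intro bij_betw_combine) (auto simp: f_def bij_betw_def)
  moreover have "{0} \<union> (UNIV - {0}) = (UNIV :: 'a set)"
    by blast
  ultimately have "bij_betw f UNIV {..<CARD('a)}"
    by (simp add: n lessThan_Suc_eq_insert_0)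
  then show ?thesis
    using f_def by auto
qed

definition field_digit :: "'a::{finite,field} \<Rightarrow> nat" where
  "field_digit = (SOME f. bij_betw f UNIV {..<CARD('a)} \<and> f 0 = 0)"

lemma bij_field_digit: "bij_betw (field_digit :: 'a::{finite,field} \<Rightarrow> nat) UNIV {..<CARD('a)}"
  and field_digit_zero [simp]: "field_digit (0::'a) = 0"
  using someI_ex[OF ex_bij_fixing_zero[where 'a = 'a]] unfolding field_digit_def by blast+

lemma field_digit_less: "field_digit (a::'a::{finite,field}) < CARD('a)"
  using bij_field_digit by (auto simp: bij_betw_def)

lemma field_digit_eq_iff [simp]: "field_digit a = field_digit b \<longleftrightarrow> a = b"
  using bij_field_digit by (auto simp: bij_betw_def inj_def)

lemma double_sum_field_digit:
  "2 * (\<Sum>a\<in>UNIV. field_digit (a::'a::{finite,field})) = CARD('a) * (CARD('a) - 1)"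
proof -
  obtain n where n: "CARD('a) = Suc n"
    using gr0_implies_Suc[of "CARD('a)"] by auto
  have "(\<Sum>a\<in>UNIV. field_digit (a::'a)) = (\<Sum>i\<in>{0..n}. i)"
    using sum.reindex_bij_betw[OF bij_field_digit[where 'a = 'a], of "\<lambda>i. i"]
    by (simp add: n lessThan_Suc_atMost atLeast0AtMost)
  then show ?thesis
    using double_gauss_sum[where 'a = nat, of n] n by simp
qed

lemma sum_digits_less:
  fixes q :: nat
  assumes "\<And>j. j < k \<Longrightarrow> d j < q"
  shows "(\<Sum>j<k. q ^ j * d j) < q ^ k"
  using assms
proof (induction k)
  case (Suc k)
  have "(\<Sum>j<Suc k. q ^ j * d j) < q ^ k + q ^ k * d k"
    using Suc by simp
  also have "\<dots> \<le> q ^ k * q"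
    using Suc.prems[of k] mult_le_mono2[of "Suc (d k)" q "q ^ k"] by simp
  finally show ?case by (simp add: mult.commute)
qed simp

lemma sum_digits_eqD:
  fixes q :: nat
  assumes "\<And>j. j < k \<Longrightarrow> d j < q" "\<And>j. j < k \<Longrightarrow> e j < q"
    and "(\<Sum>j<k. q ^ j * d j) = (\<Sum>j<k. q ^ j * e j)"
  shows "j < k \<Longrightarrow> d j = e j"
  using assms
proof (induction k)
  case (Suc k)
  let ?D = "\<Sum>j<k. q ^ j * d j" and ?E = "\<Sum>j<k. q ^ j * e j"
  have "?D < q ^ k" "?E < q ^ k"
    using Suc.prems(2,3) by (intro sum_digits_less; simp)+
  moreover have "?D + q ^ k * d k = ?E + q ^ k * e k"
    using Suc.prems(4) by simp
  ultimately have "d k = e k" "?D = ?E"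
    using mult_add_eq_mult_add_lessD[of "q ^ k" "d k" ?D "e k" ?E] by (simp_all add: add.commute)
  then show ?case
    using Suc.IH[OF _ _ _ \<open>?D = ?E\<close>] Suc.prems(1-3) by (auto simp: less_Suc_eq)
qed simp

lemma geometric_sum_nat: "1 \<le> q \<Longrightarrow> (q - 1) * (\<Sum>j<k. q ^ j) + 1 = (q::nat) ^ k"
proof -
  assume "1 \<le> q"
  then have "int ((q - 1) * (\<Sum>j<k. q ^ j) + 1) = int (q ^ k)"
    using power_diff_1_eq[of "int q" k] by (simp add: of_nat_diff)
  then show ?thesis by presburger
qed

lemma sum_if_affine_nonzero:
  fixes f :: "'a::{finite,field} \<Rightarrow> 'b::comm_monoid_add"
  assumes "r \<noteq> 0"
  shows "(\<Sum>a\<in>UNIV. if r * a + p \<noteq> 0 then f a else 0) + f (- p / r) = (\<Sum>a\<in>UNIV. f a)"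
proof -
  have root: "r * a + p = 0 \<longleftrightarrow> a = - p / r" for a
    using assms by (auto simp: eq_divide_eq add_eq_0_iff mult.commute)
  have "(\<Sum>a\<in>UNIV. if r * a + p \<noteq> 0 then f a else 0) = (\<Sum>a\<in>UNIV - {- p / r}. f a)"
    by (subst sum.remove[of _ "- p / r"]) (use root in \<open>auto intro!: sum.cong\<close>)
  moreover have "(\<Sum>a\<in>UNIV. f a) = f (- p / r) + (\<Sum>a\<in>UNIV - {- p / r}. f a)"
    by (simp add: sum.remove)
  ultimately show ?thesis
    by (simp add: add.commute)
qed

lemma sum_if_add_nonzero:
  fixes f :: "'a::{finite,field} \<Rightarrow> 'b::comm_monoid_add"
  shows "(\<Sum>a\<in>UNIV. if a + p \<noteq> 0 then f a else 0) + f (- p) = (\<Sum>a\<in>UNIV. f a)"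
  using sum_if_affine_nonzero[of 1 p f] by simp

section \<open>From dimension \<open>k\<close> to dimension \<open>k + 1\<close>\<close>

lemma col_weight_Suc_ambient:
  assumes "\<forall>v\<in>#M. v \<in> ambient k"
  shows "col_weight (Suc k) M u = col_weight k M (u(k := 0))"
proof -
  have "filter_mset (\<lambda>v. dotp (Suc k) u v \<noteq> 0) M = filter_mset (\<lambda>v. dotp k (u(k := 0)) v \<noteq> 0) M"
    using assms by (intro filter_mset_cong0) (simp add: dotp_Suc_ambient dotp_cong[of k u "u(k := 0)"])
  then show ?thesis
    unfolding col_weight_def by simp
qed

lemma eq_scalev_unit_vec: "u(k := 0) = 0 \<Longrightarrow> u = scalev (u k) (unit_vec k)"
proof
  fix i
  assume "u(k := 0) = 0"
  then have "i \<noteq> k \<Longrightarrow> u i = 0"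
    by (metis fun_upd_other zero_fun_def)
  then show "u i = scalev (u k) (unit_vec k) i"
    by (cases "i = k") (simp_all add: unit_vec_def)
qed

lemma scalev_fun_upd_zero: "(scalev c u)(k := 0) = scalev c (u(k := 0))"
  by (simp add: fun_eq_iff)

lemma ex_scalev_if_fun_upd_eq_0:
  assumes "u(k := 0) = 0" "v(k := 0) = 0" "u \<noteq> 0"
  shows "\<exists>c. v = scalev c u"
proof -
  have u_eq: "u = scalev (u k) (unit_vec k)" and v_eq: "v = scalev (v k) (unit_vec k)"
    using assms(1,2) eq_scalev_unit_vec by blast+
  then have "u k \<noteq> 0"
    using assms(3) by (metis V.scale_zero_left)
  have "v = scalev (v k / u k) u"
  proof
    fix i
    show "v i = scalev (v k / u k) u i"
      using fun_cong[OF u_eq, of i] fun_cong[OF v_eq, of i] \<open>u k \<noteq> 0\<close> by (simp add: unit_vec_def)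
  qed
  then show ?thesis ..
qed

lemma ex_scalev_if_lift_weights_eq:
  fixes R :: "(nat \<Rightarrow> 'a::field) multiset"
  assumes M: "mws_columns k M"
    and R_sep: "\<And>x y. x \<in> ambient (Suc k) \<Longrightarrow> y \<in> ambient (Suc k) \<Longrightarrow> x(k := 0) = y(k := 0) \<Longrightarrow>
      x(k := 0) \<noteq> 0 \<Longrightarrow> col_weight (Suc k) R x = col_weight (Suc k) R y \<Longrightarrow> x k = y k"
    and u: "u \<in> ambient (Suc k) - {0}" and v: "v \<in> ambient (Suc k) - {0}"
    and W_eq: "col_weight k M (u(k := 0)) = col_weight k M (v(k := 0))"
    and R_eq: "col_weight (Suc k) R u = col_weight (Suc k) R v"
  shows "\<exists>c. v = scalev c u"
proof -
  have trunc: "u(k := 0) \<in> ambient k" "v(k := 0) \<in> ambient k"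
    using u v fun_upd_in_ambient_Suc by blast+
  have "u(k := 0) = 0 \<longleftrightarrow> v(k := 0) = 0"
    using W_eq mws_columnsD(2)[OF M] trunc by (metis col_weight_zero less_irrefl)
  show ?thesis
  proof (cases "u(k := 0) = 0")
    case True
    then show ?thesis
      using ex_scalev_if_fun_upd_eq_0 \<open>u(k := 0) = 0 \<longleftrightarrow> v(k := 0) = 0\<close> u by blast
  next
    case False
    then obtain c where c: "v(k := 0) = scalev c (u(k := 0))" "v(k := 0) \<noteq> 0"
      using mws_columnsD(3)[OF M] W_eq trunc \<open>u(k := 0) = 0 \<longleftrightarrow> v(k := 0) = 0\<close> by blast
    then have "c \<noteq> 0"
      by auto
    define y where "y = scalev (inverse c) v"
    have y_trunc: "y(k := 0) = u(k := 0)"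
      using c \<open>c \<noteq> 0\<close> unfolding y_def scalev_fun_upd_zero by simp
    have "col_weight (Suc k) R y = col_weight (Suc k) R u"
      unfolding y_def using col_weight_scalev[of "inverse c"] \<open>c \<noteq> 0\<close> R_eq by simp
    then have "u k = y k"
      using R_sep[of u y] u v ambient_scalev[of v "Suc k"] y_trunc False unfolding y_def by simp
    then have "y = u"
      using y_trunc by (metis fun_upd_triv fun_upd_upd)
    then show ?thesis
      using \<open>c \<noteq> 0\<close> unfolding y_def by (metis V.scale_one V.scale_scale right_inverse)
  qed
qed

text \<open>The new weight is \<open>m\<close> times the old weight of the truncated message plus the weight
  under \<open>R\<close>, read off as quotient and remainder modulo \<open>m\<close>: the old columns determine the
  truncated message up to a scalar, and \<open>R\<close> then fixes the last coordinate.\<close>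

lemma mws_columns_lift:
  fixes R :: "(nat \<Rightarrow> 'a::field) multiset"
  assumes M: "mws_columns k M"
    and R_cols: "\<And>v. v \<in># R \<Longrightarrow> v \<in> ambient (Suc k) \<and> v \<noteq> 0"
    and R_less: "\<And>u. col_weight (Suc k) R u < m"
    and R_pos: "\<And>u. u k \<noteq> 0 \<Longrightarrow> 0 < col_weight (Suc k) R u"
    and R_sep: "\<And>x y. x \<in> ambient (Suc k) \<Longrightarrow> y \<in> ambient (Suc k) \<Longrightarrow> x(k := 0) = y(k := 0) \<Longrightarrow>
      x(k := 0) \<noteq> 0 \<Longrightarrow> col_weight (Suc k) R x = col_weight (Suc k) R y \<Longrightarrow> x k = y k"
  shows "mws_columns (Suc k) (repeat_mset m M + R)"
proof -
  let ?M' = "repeat_mset m M + R" and ?W = "col_weight k M" and ?R = "col_weight (Suc k) R"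
  have weight: "col_weight (Suc k) ?M' u = m * ?W (u(k := 0)) + ?R u" for u
    using mws_columnsD(1)[OF M] col_weight_Suc_ambient[of M k u]
    by (simp add: col_weight_union col_weight_repeat_mset)
  have cols: "v \<in> ambient (Suc k) \<and> v \<noteq> 0" if "v \<in># ?M'" for v
  proof -
    have "v \<in># M \<or> v \<in># R"
      using that by (metis count_eq_zero_iff count_repeat_mset mult_zero_right union_iff)
    then show ?thesis
      using R_cols mws_columnsD(1)[OF M] ambient_mono[of k "Suc k"] by auto
  qed
  have pos: "0 < col_weight (Suc k) ?M' u" if u: "u \<in> ambient (Suc k)" "u \<noteq> 0" for u
  proof (cases "u(k := 0) = 0")
    case True
    then have "u k \<noteq> 0"
      using u eq_scalev_unit_vec by fastforce
    then show ?thesis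
      using R_pos weight[of u] by simp
  next
    case False
    then have "0 < ?W (u(k := 0))"
      using mws_columnsD(2)[OF M] u(1) fun_upd_in_ambient_Suc by blast
    moreover have "0 < m"
      using R_less[of u] by linarith
    ultimately show ?thesis
      using weight[of u] by simp
  qed
  have sep: "\<exists>c. v = scalev c u"
    if u: "u \<in> ambient (Suc k) - {0}" and v: "v \<in> ambient (Suc k) - {0}"
      and eq: "col_weight (Suc k) ?M' u = col_weight (Suc k) ?M' v" for u v
  proof -
    have "m * ?W (u(k := 0)) + ?R u = m * ?W (v(k := 0)) + ?R v"
      using eq by (simp add: weight)
    from mult_add_eq_mult_add_lessD[OF this R_less R_less]
    show ?thesis
      using ex_scalev_if_lift_weights_eq[where R = R] M R_sep u v by blast
  qed
  show ?thesis
    unfolding mws_columns_def using cols pos sep by blast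
qed

text \<open>A column \<open>e\<^sub>k + a e\<^sub>j\<close> is orthogonal to \<open>u\<close> exactly for \<open>a = - u\<^sub>k / u\<^sub>j\<close>, so for
  \<open>u\<^sub>k \<noteq> 0\<close> the \<open>j\<close>-th block misses \<open>q\<^sup>j\<close> times the digit of \<open>- u\<^sub>k / u\<^sub>j\<close>, and the weight
  encodes these ratios in base \<open>q\<close>.\<close>

definition lift_columns :: "nat \<Rightarrow> (nat \<Rightarrow> 'a::{finite,field}) multiset" where
  "lift_columns k =
     (\<Sum>j<k. \<Sum>a\<in>UNIV. replicate_mset (CARD('a) ^ j * field_digit a) (unit_vec k + scalev a (unit_vec j)))
     + replicate_mset (CARD('a) ^ k) (unit_vec k)"

definition lift_digit :: "nat \<Rightarrow> (nat \<Rightarrow> 'a::{finite,field}) \<Rightarrow> nat \<Rightarrow> nat" where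
  "lift_digit k u j = (if u j = 0 then 0 else field_digit (- u k / u j))"

lemma lift_digit_less: "lift_digit k (u :: nat \<Rightarrow> 'a::{finite,field}) j < CARD('a)"
  using field_digit_less[where 'a = 'a] finite_UNIV_card_ge_0[where 'a = 'a]
  by (simp add: lift_digit_def)

lemma size_lift_columns:
  "size (lift_columns k :: (nat \<Rightarrow> 'a::{finite,field}) multiset)
     = (\<Sum>j<k. CARD('a) ^ j * (\<Sum>a\<in>UNIV. field_digit (a::'a))) + CARD('a) ^ k"
  unfolding lift_columns_def by (simp add: sum_distrib_left)

lemma col_weight_lift_columns:
  fixes u :: "nat \<Rightarrow> 'a::{finite,field}"
  shows "col_weight (Suc k) (lift_columns k) u
     = (\<Sum>j<k. CARD('a) ^ j * (\<Sum>a\<in>UNIV. if u j * a + u k \<noteq> 0 then field_digit a else 0))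
       + (if u k \<noteq> 0 then CARD('a) ^ k else 0)"
proof -
  have "dotp (Suc k) u (unit_vec k + scalev a (unit_vec j)) = u j * a + u k" if "j < k" for j a
    using that by (simp add: dotp_add_right dotp_scalev_right dotp_unit_vec_right mult.commute)
  then show ?thesis
    unfolding lift_columns_def
    by (simp add: col_weight_union col_weight_sum col_weight_replicate_mset dotp_unit_vec_right
        sum_distrib_left if_distrib cong: if_cong)
qed

lemma col_weight_lift_columns_nonzero:
  fixes u :: "nat \<Rightarrow> 'a::{finite,field}"
  assumes "u k \<noteq> 0"
  shows "col_weight (Suc k) (lift_columns k) u + (\<Sum>j<k. CARD('a) ^ j * lift_digit k u j)
    = size (lift_columns k :: (nat \<Rightarrow> 'a) multiset)"
proof -
  have "(\<Sum>a\<in>UNIV. if u j * a + u k \<noteq> 0 then field_digit a else 0) + lift_digit k u j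
      = (\<Sum>a\<in>UNIV. field_digit (a::'a))" for j
    using sum_if_affine_nonzero[of "u j" "u k" field_digit] assms by (auto simp: lift_digit_def)
  then show ?thesis
    using assms
    by (simp add: col_weight_lift_columns size_lift_columns sum.distrib[symmetric]
        distrib_left[symmetric])
qed

lemma col_weight_lift_columns_zero:
  fixes u :: "nat \<Rightarrow> 'a::{finite,field}"
  assumes "u k = 0"
  shows "col_weight (Suc k) (lift_columns k) u + CARD('a) ^ k \<le> size (lift_columns k :: (nat \<Rightarrow> 'a) multiset)"
  using assms
  by (auto simp: col_weight_lift_columns size_lift_columns intro!: sum_mono mult_le_mono2)

lemma col_weight_lift_columns_nonzero_less:
  fixes u :: "nat \<Rightarrow> 'a::{finite,field}"
  assumes "u k \<noteq> 0"
  shows "size (lift_columns k :: (nat \<Rightarrow> 'a) multiset) < col_weight (Suc k) (lift_columns k) u + CARD('a) ^ k"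
proof -
  have "(\<Sum>j<k. CARD('a) ^ j * lift_digit k u j) < CARD('a) ^ k"
    by (rule sum_digits_less) (rule lift_digit_less)
  then show ?thesis
    using col_weight_lift_columns_nonzero[of u k, OF assms] by linarith
qed

lemma lift_columns_separates:
  fixes x y :: "nat \<Rightarrow> 'a::{finite,field}"
  assumes x: "x \<in> ambient (Suc k)" and trunc_eq: "x(k := 0) = y(k := 0)" and "x(k := 0) \<noteq> 0"
    and weight_eq: "col_weight (Suc k) (lift_columns k) x = col_weight (Suc k) (lift_columns k) y"
  shows "x k = y k"
proof -
  obtain i where "(x(k := 0)) i \<noteq> 0"
    using \<open>x(k := 0) \<noteq> 0\<close> by (auto simp: fun_eq_iff)
  then have "i \<noteq> k" "x i \<noteq> 0"
    by (simp_all split: if_splits)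
  moreover from this(2) x have "i < Suc k"
    unfolding ambient_def by (metis (mono_tags, lifting) mem_Collect_eq not_less)
  ultimately have i: "i < k" "x i \<noteq> 0"
    by simp_all
  have same: "x j = y j" if "j < k" for j
    using fun_cong[OF trunc_eq, of j] that by simp
  show ?thesis
  proof (cases "x k = 0"; cases "y k = 0")
    assume "x k \<noteq> 0" "y k \<noteq> 0"
    then have "(\<Sum>j<k. CARD('a) ^ j * lift_digit k x j) = (\<Sum>j<k. CARD('a) ^ j * lift_digit k y j)"
      using col_weight_lift_columns_nonzero[of x k] col_weight_lift_columns_nonzero[of y k] weight_eq
      by linarith
    then have "lift_digit k x i = lift_digit k y i"
      by (rule sum_digits_eqD[OF lift_digit_less lift_digit_less _ i(1)])
    then have "- x k / x i = - y k / x i"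
      using i same[OF i(1)] unfolding lift_digit_def by simp
    then show ?thesis
      using i(2) by simp
  next
    assume "x k = 0" "y k \<noteq> 0"
    then show ?thesis
      using col_weight_lift_columns_zero[of x k] col_weight_lift_columns_nonzero_less[of y k] weight_eq
      by linarith
  next
    assume "x k \<noteq> 0" "y k = 0"
    then show ?thesis
      using col_weight_lift_columns_zero[of y k] col_weight_lift_columns_nonzero_less[of x k] weight_eq
      by linarith
  qed simp
qed

lemma mws_columns_Suc:
  fixes M :: "(nat \<Rightarrow> 'a::{finite,field}) multiset"
  assumes "mws_columns k M"
  shows "mws_columns (Suc k) (repeat_mset (size (lift_columns k :: (nat \<Rightarrow> 'a) multiset) + 1) M
    + lift_columns k)"
proof (rule mws_columns_lift[OF assms])
  fix v :: "nat \<Rightarrow> 'a"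
  assume "v \<in># lift_columns k"
  then have "v = unit_vec k \<or> (\<exists>j<k. \<exists>a. v = unit_vec k + scalev a (unit_vec j))"
    unfolding lift_columns_def by (auto simp: set_mset_sum split: if_splits)
  then have "v \<in> ambient (Suc k)" "v k = 1"
    by (auto simp: ambient_def unit_vec_def)
  then show "v \<in> ambient (Suc k) \<and> v \<noteq> 0"
    by auto
next
  show "col_weight (Suc k) (lift_columns k) u < size (lift_columns k :: (nat \<Rightarrow> 'a) multiset) + 1"
    for u :: "nat \<Rightarrow> 'a"
    unfolding col_weight_def by (simp add: le_imp_less_Suc size_filter_mset_lesseq)
next
  show "0 < col_weight (Suc k) (lift_columns k) u" if "u k \<noteq> 0" for u :: "nat \<Rightarrow> 'a"
    using col_weight_lift_columns_nonzero_less[of u k, OF that] size_lift_columns[of k, where 'a = 'a]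
    by linarith
qed (rule lift_columns_separates)

lemma size_lift_columns_less:
  "size (lift_columns k :: (nat \<Rightarrow> 'a::{finite,field}) multiset) < CARD('a) ^ Suc k"
proof -
  let ?q = "CARD('a)" and ?T = "\<Sum>a\<in>UNIV. field_digit (a::'a)" and ?S = "\<Sum>j<k. CARD('a) ^ j"
  have q: "2 \<le> ?q"
    by (rule two_le_card_field)
  have "2 * (?T * ?S) = ?q * ((?q - 1) * ?S)"
    using double_sum_field_digit[where 'a = 'a] by (metis mult.assoc mult.left_commute)
  also have "\<dots> = ?q * (?q ^ k - 1)"
    using geometric_sum_nat[of ?q k] q by simp
  finally have "2 * (?T * ?S) = ?q * (?q ^ k - 1)" .
  moreover have "size (lift_columns k :: (nat \<Rightarrow> 'a) multiset) = ?T * ?S + ?q ^ k"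
    by (simp add: size_lift_columns sum_distrib_left mult.commute)
  ultimately have "2 * size (lift_columns k :: (nat \<Rightarrow> 'a) multiset) = ?q * (?q ^ k - 1) + 2 * ?q ^ k"
    by simp
  moreover have "2 * ?q ^ k \<le> ?q * ?q ^ k"
    using q by simp
  moreover have "?q * (?q ^ k - 1) = ?q * ?q ^ k - ?q"
    by (simp add: diff_mult_distrib2)
  moreover have "1 \<le> ?q ^ k"
    using q by simp
  ultimately show ?thesis
    using q unfolding power_Suc by linarith
qed

section \<open>Dimension three\<close>

lemma mws_columnsI_points:
  fixes M :: "(nat \<Rightarrow> 'a::field) multiset"
  assumes cols: "\<And>v. v \<in># M \<Longrightarrow> v \<in> ambient k \<and> v \<noteq> 0"
    and points: "\<And>u. u \<in> ambient k \<Longrightarrow> u \<noteq> 0 \<Longrightarrow> \<exists>c. c \<noteq> 0 \<and> scalev c u \<in> P"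
    and pos: "\<And>p. p \<in> P \<Longrightarrow> 0 < col_weight k M p"
    and inj: "inj_on (col_weight k M) P"
  shows "mws_columns k M"
proof -
  have "0 < col_weight k M u" if "u \<in> ambient k" "u \<noteq> 0" for u
    using points[OF that] pos col_weight_scalev by metis
  moreover have "\<exists>c. v = scalev c u"
    if u: "u \<in> ambient k - {0}" and v: "v \<in> ambient k - {0}"
      and eq: "col_weight k M u = col_weight k M v" for u v
  proof -
    obtain c d where cd: "c \<noteq> 0" "scalev c u \<in> P" "d \<noteq> 0" "scalev d v \<in> P"
      using points u v by blast
    have "col_weight k M (scalev c u) = col_weight k M (scalev d v)"
      using eq cd col_weight_scalev by metis
    then have "scalev d v = scalev c u"
      using inj cd by (auto dest: inj_onD)
    then have "v = scalev (inverse d * c) u"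
      using cd(3) by (metis V.scale_one V.scale_scale left_inverse)
    then show ?thesis ..
  qed
  ultimately show ?thesis
    unfolding mws_columns_def using cols by blast
qed

lemma inj_on_Un_less:
  fixes f :: "'a \<Rightarrow> 'b::linorder"
  assumes "inj_on f A" "inj_on f B" "\<And>a b. a \<in> A \<Longrightarrow> b \<in> B \<Longrightarrow> f a < f b"
  shows "inj_on f (A \<union> B)"
  unfolding inj_on_Un using assms by (auto simp: image_iff) (metis Diff_iff less_irrefl)

definition vec3 :: "'a::zero \<Rightarrow> 'a \<Rightarrow> 'a \<Rightarrow> nat \<Rightarrow> 'a" where
  "vec3 x y z = (\<lambda>i. if i = 0 then x else if i = 1 then y else if i = 2 then z else 0)"

lemma vec3_apply [simp]: "vec3 x y z 0 = x" "vec3 x y z (Suc 0) = y" "vec3 x y z 2 = z"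
  unfolding vec3_def by simp_all

lemma vec3_in_ambient: "vec3 x y z \<in> ambient 3"
  unfolding vec3_def ambient_def by auto

lemma vec3_eq_iff [simp]: "vec3 x y z = vec3 x' y' z' \<longleftrightarrow> x = x' \<and> y = y' \<and> z = z'"
  by (metis vec3_apply)

lemma vec3_eq_0_iff [simp]: "vec3 x y z = 0 \<longleftrightarrow> x = 0 \<and> y = 0 \<and> z = 0"
proof -
  have "vec3 0 0 0 = (0 :: nat \<Rightarrow> 'a)"
    unfolding vec3_def by (rule ext) simp
  then show ?thesis
    by (metis vec3_eq_iff)
qed

lemma scalev_vec3: "scalev c (vec3 x y z) = vec3 (c * x) (c * y) (c * z)"
  by (auto simp: vec3_def fun_eq_iff)

lemma ambient_3_eq_vec3: "u \<in> ambient 3 \<Longrightarrow> u = vec3 (u 0) (u 1) (u 2)"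
  unfolding ambient_def vec3_def by (auto simp: fun_eq_iff numeral_3_eq_3)

lemma dotp_3: "dotp 3 u v = u 0 * v 0 + u 1 * v 1 + u 2 * v 2"
  unfolding dotp_def by (simp add: eval_nat_numeral lessThan_Suc algebra_simps)

definition points_3 :: "(nat \<Rightarrow> 'a::field) set" where
  "points_3 = {vec3 1 0 0} \<union> range (\<lambda>(x, y). vec3 x y 1) \<union> range (\<lambda>x. vec3 x 1 0)"

lemma scalev_in_points_3:
  assumes "u \<in> ambient 3" "u \<noteq> 0"
  shows "\<exists>c. c \<noteq> 0 \<and> scalev c u \<in> points_3"
proof -
  obtain x y z where u: "u = vec3 x y z"
    using ambient_3_eq_vec3[OF assms(1)] by blast
  consider "z \<noteq> 0" | "z = 0" "y \<noteq> 0" | "z = 0" "y = 0" "x \<noteq> 0"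
    using assms(2) u by auto
  then show ?thesis
  proof cases
    case 1
    then show ?thesis
      by (intro exI[of _ "inverse z"]) (auto simp: u scalev_vec3 points_3_def)
  next
    case 2
    then show ?thesis
      by (intro exI[of _ "inverse y"]) (auto simp: u scalev_vec3 points_3_def)
  next
    case 3
    then show ?thesis
      by (intro exI[of _ "inverse x"]) (auto simp: u scalev_vec3 points_3_def)
  qed
qed

text \<open>The point \<open>(1,0,0)\<close> gets the smallest weight, the points \<open>(x,y,1)\<close> store the digits of
  \<open>-x\<close> and \<open>-y\<close> in base \<open>q\<close>, and the points \<open>(x,1,0)\<close> store the digit of \<open>-x\<close> at \<open>q\<^sup>2\<close>; the
  offset \<open>N\<close> lifts the last family above the second.\<close>

definition base_columns :: "nat \<Rightarrow> (nat \<Rightarrow> 'a::{finite,field}) multiset" where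
  "base_columns N =
     (\<Sum>a\<in>UNIV. \<Sum>c\<in>UNIV. replicate_mset (CARD('a) * field_digit a) (vec3 1 a c))
     + (\<Sum>a\<in>UNIV. replicate_mset (field_digit a) (vec3 1 0 a))
     + (\<Sum>a\<in>UNIV. replicate_mset (CARD('a) * field_digit a + N) (vec3 0 1 a))"

lemma size_base_columns:
  "size (base_columns N :: (nat \<Rightarrow> 'a::{finite,field}) multiset)
     = CARD('a) * CARD('a) * (\<Sum>a\<in>UNIV. field_digit (a::'a)) + (\<Sum>a\<in>UNIV. field_digit (a::'a))
       + CARD('a) * (\<Sum>a\<in>UNIV. field_digit (a::'a)) + CARD('a) * N"
  unfolding base_columns_def by (simp add: sum.distrib sum_distrib_left mult.assoc)

lemma col_weight_base_columns_affine:
  fixes x y :: "'a::{finite,field}"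
  defines "q \<equiv> CARD('a)" and "T \<equiv> \<Sum>a\<in>UNIV. field_digit (a::'a)"
  shows "col_weight 3 (base_columns N) (vec3 x y 1) + (field_digit (- x) + q * field_digit (- y))
    = q * q * T + T + (q - 1) * N"
proof -
  have "col_weight 3 (base_columns N) (vec3 x y 1)
      = (\<Sum>a\<in>UNIV. \<Sum>c\<in>UNIV. if c + (x + y * a) \<noteq> 0 then q * field_digit a else 0)
        + (\<Sum>a\<in>UNIV. if a + x \<noteq> 0 then field_digit a else 0)
        + (\<Sum>a\<in>UNIV. if a + y \<noteq> 0 then N + q * field_digit a else 0)"
    unfolding base_columns_def q_def
    by (simp add: col_weight_union col_weight_sum col_weight_replicate_mset dotp_3 algebra_simps)
  moreover have "(\<Sum>c\<in>UNIV. if c + (x + y * a) \<noteq> 0 then q * field_digit a else 0) = (q - 1) * (q * field_digit a)"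
    for a
    using sum_if_add_nonzero[of "x + y * a" "\<lambda>_. q * field_digit a"] by (simp add: q_def diff_mult_distrib)
  moreover have "(\<Sum>a\<in>UNIV. if a + x \<noteq> 0 then field_digit a else 0) + field_digit (- x) = T"
    unfolding T_def by (rule sum_if_add_nonzero)
  moreover have "(\<Sum>a\<in>UNIV. if a + y \<noteq> 0 then N + q * field_digit a else 0) + (N + q * field_digit (- y))
      = q * T + q * N"
    using sum_if_add_nonzero[of y "\<lambda>a. N + q * field_digit a"]
    by (simp add: T_def q_def sum.distrib sum_distrib_left)
  moreover have "(q - 1) * q * T + q * T = q * q * T" "q * N = (q - 1) * N + N"
    using two_le_card_field[where 'a = 'a] unfolding q_def[symmetric]
    by (simp_all add: diff_mult_distrib)
  ultimately show ?thesis
    by (simp add: sum_distrib_left T_def mult.assoc)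
qed

lemma col_weight_base_columns_line:
  fixes x :: "'a::{finite,field}"
  defines "q \<equiv> CARD('a)" and "T \<equiv> \<Sum>a\<in>UNIV. field_digit (a::'a)"
  shows "col_weight 3 (base_columns N) (vec3 x 1 0) + q * q * field_digit (- x)
    = q * q * T + q * T + q * N + (if x = 0 then 0 else T)"
proof -
  define S where "S = (\<Sum>a\<in>UNIV. if a + x \<noteq> 0 then q * field_digit a else 0)"
  have "col_weight 3 (base_columns N) (vec3 x 1 0) = q * S + (if x = 0 then 0 else T) + (q * T + q * N)"
    unfolding base_columns_def q_def T_def S_def
    by (simp add: col_weight_union col_weight_sum col_weight_replicate_mset dotp_3 sum.distrib
        sum_distrib_left algebra_simps)
  moreover have "S + q * field_digit (- x) = q * T"
    using sum_if_add_nonzero[of x "\<lambda>a. q * field_digit a"] by (simp add: S_def T_def sum_distrib_left)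
  then have "q * S + q * q * field_digit (- x) = q * q * T"
    by (metis distrib_left mult.assoc)
  ultimately show ?thesis
    by linarith
qed

lemma col_weight_base_columns_origin:
  defines "q \<equiv> CARD('a::{finite,field})" and "T \<equiv> \<Sum>a\<in>UNIV. field_digit (a::'a)"
  shows "col_weight 3 (base_columns N :: (nat \<Rightarrow> 'a) multiset) (vec3 1 0 0) = q * q * T + T"
  unfolding base_columns_def q_def T_def
  by (simp add: col_weight_union col_weight_sum col_weight_replicate_mset dotp_3 sum_distrib_left
      mult.assoc)

lemma sum_field_digit_bounds:
  defines "q \<equiv> CARD('a::{finite,field})" and "T \<equiv> \<Sum>a\<in>UNIV. field_digit (a::'a)"
  shows "1 \<le> T" and "T < q * q"
proof -
  have q: "2 \<le> q"
    unfolding q_def by (rule two_le_card_field)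
  have "2 * T = q * (q - 1)"
    unfolding q_def T_def by (rule double_sum_field_digit)
  moreover have "q * (q - 1) \<le> q * q" "0 < q * q"
    using q by simp_all
  moreover have "2 * 1 \<le> q * (q - 1)"
    using q by (intro mult_le_mono) simp_all
  ultimately show "1 \<le> T" "T < q * q"
    by linarith+
qed

lemma base_columns_origin_less_affine:
  fixes x y :: "'a::{finite,field}"
  defines "q \<equiv> CARD('a)" and "T \<equiv> \<Sum>a\<in>UNIV. field_digit (a::'a)"
  assumes N: "(q + 1) * T < N"
  shows "col_weight 3 (base_columns N) (vec3 1 0 0 :: nat \<Rightarrow> 'a) < col_weight 3 (base_columns N) (vec3 x y 1)"
proof -
  have q: "2 \<le> q"
    unfolding q_def by (rule two_le_card_field)
  have "q + 1 \<le> (q + 1) * T"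
    using mult_le_mono2[OF sum_field_digit_bounds(1), of "q + 1"] unfolding T_def by simp
  then have "(q - 1) * (q + 2) \<le> (q - 1) * N"
    using N by (intro mult_le_mono2) linarith
  moreover have "q * q \<le> (q - 1) * (q + 2)"
    using q by (cases q) (simp_all add: algebra_simps)
  moreover have "field_digit (- x) + q * field_digit (- y) < q * q"
    using field_digit_less[of "- x"] field_digit_less[of "- y"]
      mult_le_mono2[of "Suc (field_digit (- y))" q q] unfolding q_def by simp
  moreover have "col_weight 3 (base_columns N) (vec3 1 0 0 :: nat \<Rightarrow> 'a) = q * q * T + T"
    unfolding q_def T_def by (rule col_weight_base_columns_origin)
  moreover have "col_weight 3 (base_columns N) (vec3 x y 1) + (field_digit (- x) + q * field_digit (- y))
      = q * q * T + T + (q - 1) * N"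
    unfolding q_def T_def by (rule col_weight_base_columns_affine)
  ultimately show ?thesis
    by linarith
qed

lemma base_columns_affine_less_line:
  fixes x y x' :: "'a::{finite,field}"
  defines "q \<equiv> CARD('a)" and "T \<equiv> \<Sum>a\<in>UNIV. field_digit (a::'a)"
  assumes N: "(q + 1) * T < N"
  shows "col_weight 3 (base_columns N) (vec3 x y 1) < col_weight 3 (base_columns N) (vec3 x' 1 0)"
proof -
  have "q * q * field_digit (- x') \<le> q * (q * (q - 1))"
    using field_digit_less[of "- x'"] unfolding q_def by (simp add: mult.assoc)
  then have "q * q * field_digit (- x') \<le> 2 * (q * T)"
    using double_sum_field_digit[where 'a = 'a] unfolding q_def T_def by simp
  moreover have "(q - 1) * N + N = q * N" "(q + 1) * T = q * T + T"
    using two_le_card_field[where 'a = 'a] unfolding q_def by (simp_all add: algebra_simps)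
  ultimately show ?thesis
    using col_weight_base_columns_affine[where x = x and y = y and N = N] col_weight_base_columns_line[where x = x' and N = N] N
    unfolding q_def[symmetric] T_def[symmetric] by linarith
qed

lemma base_columns_affine_inj:
  fixes x y x' y' :: "'a::{finite,field}"
  assumes "col_weight 3 (base_columns N) (vec3 x y 1) = col_weight 3 (base_columns N) (vec3 x' y' 1)"
  shows "x = x' \<and> y = y'"
proof -
  have "CARD('a) * field_digit (- y) + field_digit (- x) = CARD('a) * field_digit (- y') + field_digit (- x')"
    using col_weight_base_columns_affine[where x = x and y = y and N = N] col_weight_base_columns_affine[where x = x' and y = y' and N = N] assms
    by linarith
  from mult_add_eq_mult_add_lessD[OF this field_digit_less field_digit_less]
  show ?thesis by simp
qed

lemma base_columns_line_inj:
  fixes x x' :: "'a::{finite,field}"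
  defines "q \<equiv> CARD('a)" and "T \<equiv> \<Sum>a\<in>UNIV. field_digit (a::'a)"
  assumes eq: "col_weight 3 (base_columns N) (vec3 x 1 0) = col_weight 3 (base_columns N) (vec3 x' 1 0)"
  shows "x = x'"
proof -
  let ?W = "col_weight 3 (base_columns N :: (nat \<Rightarrow> 'a) multiset)"
  have line: "?W (vec3 z 1 0) + q * q * field_digit (- z) = q * q * T + q * T + q * N + (if z = 0 then 0 else T)"
    for z :: 'a
    unfolding q_def T_def by (rule col_weight_base_columns_line)
  have False if "z = 0" "z' \<noteq> 0" "?W (vec3 z 1 0) = ?W (vec3 z' 1 0)" for z z' :: 'a
  proof -
    have "q * q \<le> q * q * field_digit (- z')"
      using field_digit_eq_iff[of "- z'" 0] that(2) by simp
    moreover have "?W (vec3 z 1 0) = q * q * T + q * T + q * N"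
      using line[of z] that(1) by simp
    moreover have "?W (vec3 z' 1 0) + q * q * field_digit (- z') = q * q * T + q * T + q * N + T"
      using line[of z'] that(2) by simp
    ultimately show False
      using that(3) sum_field_digit_bounds(2)[where 'a = 'a] unfolding q_def T_def by linarith
  qed
  then have "x \<noteq> 0 \<longleftrightarrow> x' \<noteq> 0"
    using eq by metis
  moreover have "q * q * field_digit (- x) = q * q * field_digit (- x')" if "x \<noteq> 0" "x' \<noteq> 0"
  proof -
    have "?W (vec3 x 1 0) + q * q * field_digit (- x) = q * q * T + q * T + q * N + T"
      and "?W (vec3 x' 1 0) + q * q * field_digit (- x') = q * q * T + q * T + q * N + T"
      using line[of x] line[of x'] that by simp_all
    then show ?thesis
      using eq by linarith
  qed
  ultimately show ?thesis
    using two_le_card_field[where 'a = 'a] unfolding q_def by fastforce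
qed

lemma mws_columns_base_columns:
  fixes N :: nat
  assumes N: "(CARD('a::{finite,field}) + 1) * (\<Sum>a\<in>UNIV. field_digit (a::'a)) < N"
  shows "mws_columns 3 (base_columns N :: (nat \<Rightarrow> 'a) multiset)"
proof (rule mws_columnsI_points)
  let ?W = "col_weight 3 (base_columns N :: (nat \<Rightarrow> 'a) multiset)"
  note origin_less_affine = base_columns_origin_less_affine[OF N]
    and affine_less_line = base_columns_affine_less_line[OF N]
  have origin_less_line: "?W (vec3 1 0 0) < ?W (vec3 x 1 0)" for x
    using origin_less_affine affine_less_line by (rule less_trans)
  have "0 < ?W (vec3 1 0 0)"
    using col_weight_base_columns_origin[of N, where 'a = 'a] sum_field_digit_bounds(1)[where 'a = 'a]
    by simp
  moreover from this have "0 < ?W (vec3 x y 1)" for x y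
    using origin_less_affine by (rule less_trans)
  moreover from this have "0 < ?W (vec3 x 1 0)" for x
    using affine_less_line by (rule less_trans)
  ultimately show "0 < ?W p" if "p \<in> points_3" for p
    using that unfolding points_3_def by auto
  show "inj_on ?W points_3"
    unfolding points_3_def
  proof (intro inj_on_Un_less)
    show "inj_on ?W (range (\<lambda>(x, y). vec3 x y 1))"
      by (auto intro!: inj_onI dest: base_columns_affine_inj)
    show "inj_on ?W (range (\<lambda>x. vec3 x 1 0))"
      by (auto intro!: inj_onI dest: base_columns_line_inj)
  qed (use origin_less_affine affine_less_line origin_less_line in auto)
  show "v \<in> ambient 3 \<and> v \<noteq> 0" if "v \<in># base_columns N" for v :: "nat \<Rightarrow> 'a"
    using that unfolding base_columns_def by (auto simp: set_mset_sum vec3_in_ambient split: if_splits)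
qed (rule scalev_in_points_3)

lemma size_base_columns_less:
  defines "q \<equiv> CARD('a::{finite,field})" and "T \<equiv> \<Sum>a\<in>UNIV. field_digit (a::'a)"
  shows "size (base_columns ((q + 1) * T + 1) :: (nat \<Rightarrow> 'a) multiset) < q ^ 4"
proof -
  obtain p where p: "q = p + 2"
    using two_le_card_field[where 'a = 'a] unfolding q_def by (metis le_add_diff_inverse2)
  have T: "2 * T = (p + 2) * (p + 1)"
    using double_sum_field_digit[where 'a = 'a] unfolding q_def[symmetric] T_def[symmetric] p by simp
  have "2 * size (base_columns ((q + 1) * T + 1) :: (nat \<Rightarrow> 'a) multiset)
      = 2 * T * (2 * q * q + 2 * q + 1) + 2 * q"
    unfolding size_base_columns q_def[symmetric] T_def[symmetric] by (simp add: algebra_simps)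
  also have "\<dots> = (p + 2) * (p + 1) * (2 * (p + 2) * (p + 2) + 2 * (p + 2) + 1) + 2 * (p + 2)"
    unfolding T p ..
  also have "\<dots> < 2 * (p + 2) ^ 4"
    by (simp add: power4_eq_xxxx algebra_simps)
  finally show ?thesis
    unfolding p by simp
qed

lemma mws_exponent_Suc:
  assumes "2 \<le> k"
  shows "(Suc k ^ 2 + Suc k - 4) div 2 = (k ^ 2 + k - 4) div 2 + Suc k"
proof -
  have "2 * 2 \<le> k * k"
    using assms by (intro mult_le_mono)
  then have "Suc k ^ 2 + Suc k - 4 = (k ^ 2 + k - 4) + 2 * Suc k"
    by (simp add: power2_eq_square algebra_simps)
  then show ?thesis
    by simp
qed

lemma ex_short_mws_columns:
  assumes "3 \<le> k"
  shows "\<exists>M :: (nat \<Rightarrow> 'a::{finite,field}) multiset.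
    mws_columns k M \<and> size M < CARD('a) ^ ((k ^ 2 + k - 4) div 2)"
  using assms
proof (induction k rule: dec_induct)
  case base
  let ?N = "(CARD('a) + 1) * (\<Sum>a\<in>UNIV. field_digit (a::'a)) + 1"
  have "mws_columns 3 (base_columns ?N :: (nat \<Rightarrow> 'a) multiset)"
    by (rule mws_columns_base_columns) simp
  moreover have "size (base_columns ?N :: (nat \<Rightarrow> 'a) multiset) < CARD('a) ^ ((3 ^ 2 + 3 - 4) div 2)"
    using size_base_columns_less[where 'a = 'a] by simp
  ultimately show ?case by blast
next
  case (step k)
  let ?R = "lift_columns k :: (nat \<Rightarrow> 'a) multiset"
  obtain M :: "(nat \<Rightarrow> 'a) multiset"
    where M: "mws_columns k M" "size M < CARD('a) ^ ((k ^ 2 + k - 4) div 2)"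
    using step.IH by blast
  let ?M' = "repeat_mset (size ?R + 1) M + ?R"
  have "size ?M' < (size ?R + 1) * (size M + 1)"
    by (simp add: algebra_simps)
  also have "\<dots> \<le> CARD('a) ^ Suc k * CARD('a) ^ ((k ^ 2 + k - 4) div 2)"
    using size_lift_columns_less[of k, where 'a = 'a] M(2) by (intro mult_le_mono) simp_all
  also have "\<dots> = CARD('a) ^ ((Suc k ^ 2 + Suc k - 4) div 2)"
    using mws_exponent_Suc[of k] step.hyps(1) by (simp add: power_add mult.commute)
  finally show ?case
    using mws_columns_Suc[OF M(1)] by blast
qed

theorem mainTheorem16:
  fixes k :: nat
  assumes "k \<ge> 3"
  shows "\<exists>(n::nat) (C :: (nat \<Rightarrow> 'a::{finite,field}) set).
           is_code n k C \<and> is_MWS n k C \<and> n < CARD('a) ^ ((k^2 + k - 4) div 2)"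
proof -
  obtain M :: "(nat \<Rightarrow> 'a) multiset"
    where "mws_columns k M" "size M < CARD('a) ^ ((k ^ 2 + k - 4) div 2)"
    using ex_short_mws_columns[OF assms] by blast
  then show ?thesis
    using mws_columns_code by blast
qed

end
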